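(* Let $n\ge1$, $N\ge3$, $m=n+N$, let $u>0$ solve $\partial_tu=\Delta_xu$ on $\mathbb{R}^n\times(0,\infty)$ with $u=t^{-n/2}e^{-f}$, and let $v,b,\psi,B$ be as in the context. Set $d=2m|\nabla b|^2$. Then on $\mathbb{R}^n\times(\mathbb{R}^N\setminus\{0\})$, \[ \Delta d+2(2-m)\langle\nabla\log b,\nabla d\rangle=\frac{m}{b^2}|B|^2+\frac{4m}{2-m}\langle\nabla\log b,\nabla\psi\rangle+\frac{2\,d\,\psi}{(2-m)b^2}+\frac{4\psi^2}{(2-m)^2b^2}. \]
   Context: $\mathbb{R}^m=\mathbb{R}^n\times\mathbb{R}^N$, points $(x,y)$, $r=|y|$; $\nabla,\Delta,\mathrm{Hess},\langle\cdot,\cdot\rangle$ are Euclidean on $\mathbb{R}^m$. $v(x,y)=r^{2-m}\exp(-f(x,\tfrac{r^2}{2N}))$, $b=v^{1/(2-m)}$, $\psi=b^m\Delta v$, $B=\mathrm{Hess}(b^2)-\frac{\Delta b^2}{m}I_m$ with $|B|^2$ its squared Hilbert–Schmidt norm. *)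

theory Defs
  imports "HOL-Analysis.Analysis"
begin

definition grad :: "('v::euclidean_space \<Rightarrow> real) \<Rightarrow> 'v \<Rightarrow> 'v" where
  "grad g p = (\<Sum>i\<in>Basis. frechet_derivative g (at p) i *\<^sub>R i)"

definition hess :: "('v::euclidean_space \<Rightarrow> real) \<Rightarrow> 'v \<Rightarrow> 'v \<Rightarrow> 'v \<Rightarrow> real" where
  "hess g p i j = frechet_derivative (\<lambda>q. frechet_derivative g (at q) j) (at p) i"

definition lap :: "('v::euclidean_space \<Rightarrow> real) \<Rightarrow> 'v \<Rightarrow> real" where
  "lap g p = (\<Sum>i\<in>Basis. hess g p i i)"

definition tf_hess_sq :: "('v::euclidean_space \<Rightarrow> real) \<Rightarrow> 'v \<Rightarrow> real" where
  "tf_hess_sq g p = (\<Sum>i\<in>Basis. \<Sum>j\<in>Basis.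
      (hess g p i j - (if i = j then lap g p / real DIM('v) else 0))\<^sup>2)"

fun Ck_on :: "nat \<Rightarrow> ('v::euclidean_space \<Rightarrow> real) \<Rightarrow> 'v set \<Rightarrow> bool" where
  "Ck_on 0 g S = continuous_on S g"
| "Ck_on (Suc k) g S = (g differentiable_on S \<and> continuous_on S g \<and>
      (\<forall>e\<in>Basis. Ck_on k (\<lambda>q. frechet_derivative g (at q) e) S))"

definition smooth_on :: "('v::euclidean_space \<Rightarrow> real) \<Rightarrow> 'v set \<Rightarrow> bool" where
  "smooth_on g S = (\<forall>k. Ck_on k g S)"

text \<open>The objects of the paper on R^m = R^n x R^N, points (x,y), m = n + N.\<close>

definition vfun :: "('a::euclidean_space \<Rightarrow> real \<Rightarrow> real) \<Rightarrow> 'a \<times> 'b::euclidean_space \<Rightarrow> real" where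
  "vfun f = (\<lambda>(x, y). norm y powr (2 - real DIM('a \<times> 'b))
                      * exp (- f x ((norm y)\<^sup>2 / (2 * real DIM('b)))))"

definition bfun :: "('a::euclidean_space \<Rightarrow> real \<Rightarrow> real) \<Rightarrow> 'a \<times> 'b::euclidean_space \<Rightarrow> real" where
  "bfun f = (\<lambda>p. (vfun f p :: real) powr (1 / (2 - real DIM('a \<times> 'b))))"

definition psifun :: "('a::euclidean_space \<Rightarrow> real \<Rightarrow> real) \<Rightarrow> 'a \<times> 'b::euclidean_space \<Rightarrow> real" where
  "psifun f = (\<lambda>p. (bfun f p :: real) ^ DIM('a \<times> 'b) * lap (vfun f :: 'a \<times> 'b \<Rightarrow> real) p)"

definition Bsq :: "('a::euclidean_space \<Rightarrow> real \<Rightarrow> real) \<Rightarrow> 'a \<times> 'b::euclidean_space \<Rightarrow> real" where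
  "Bsq f = tf_hess_sq (\<lambda>p. ((bfun f p :: real))\<^sup>2 :: real)"

definition dfun :: "('a::euclidean_space \<Rightarrow> real \<Rightarrow> real) \<Rightarrow> 'a \<times> 'b::euclidean_space \<Rightarrow> real" where
  "dfun f = (\<lambda>p. 2 * real DIM('a \<times> 'b) * (norm (grad (bfun f :: 'a \<times> 'b \<Rightarrow> real) p))\<^sup>2)"

end

theory Submission
  imports Defs
begin

(* Write a = grad b, H = Hess b and k = 2 - m. Since v = b^k, one has
   psi = k (b Delta b + (k - 1) |a|^2) and Hess (b^2) = 2 (a a^T + b H), while Bochner's
   formula Delta |a|^2 = 2 |H|^2 + 2 <a, grad Delta b>, which rests on the symmetry of
   third derivatives, computes Delta d. Both sides of the identity thereby become the same
   rational function of b, |a|^2, Delta b, <H a, a>, |H|^2 and <a, grad Delta b>.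
   So the identity holds for every smooth positive b on an open subset of R^m with m <> 2. *)

section \<open>Directional derivatives\<close>

abbreviation partial :: "'v \<Rightarrow> ('v::real_normed_vector \<Rightarrow> real) \<Rightarrow> 'v \<Rightarrow> real" where
  "partial e g q \<equiv> frechet_derivative g (at q) e"

lemma partial_cong_open:
  assumes "open S" "q \<in> S" "\<And>x. x \<in> S \<Longrightarrow> g x = h x"
  shows "partial e g q = partial e h q"
proof -
  have "(g has_derivative D) (at q) \<longleftrightarrow> (h has_derivative D) (at q)" for D
    using has_derivative_transform_within_open[OF _ assms(1,2)] assms(3) by metis
  then show ?thesis unfolding frechet_derivative_def by simp
qed

lemma differentiable_cong_open:
  assumes "g differentiable at q" "open S" "q \<in> S" "\<And>x. x \<in> S \<Longrightarrow> g x = h x"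
  shows "h differentiable at q"
  using assms has_derivative_transform_within_open[OF _ assms(2,3)]
  unfolding differentiable_def by metis

lemma has_derivative_imp_partial: "(g has_derivative g') (at q) \<Longrightarrow> partial e g q = g' e"
  by (metis frechet_derivative_at)

lemma has_derivative_frechet_derivative:
  "g differentiable at q \<Longrightarrow> (g has_derivative frechet_derivative g (at q)) (at q)"
  using frechet_derivative_works by blast

lemma partial_add:
  fixes g h :: "'v::real_normed_vector \<Rightarrow> real"
  assumes "g differentiable at q" "h differentiable at q"
  shows "partial e (\<lambda>x. g x + h x) q = partial e g q + partial e h q"
  using has_derivative_imp_partial[OF has_derivative_add[OF assms[THEN has_derivative_frechet_derivative]]]
  by simp

lemma partial_mult:
  fixes g h :: "'v::real_normed_vector \<Rightarrow> real"
  assumes "g differentiable at q" "h differentiable at q"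
  shows "partial e (\<lambda>x. g x * h x) q = partial e g q * h q + g q * partial e h q"
  using has_derivative_imp_partial[OF has_derivative_mult[OF assms[THEN has_derivative_frechet_derivative]]]
  by simp

lemma partial_cmult:
  fixes g :: "'v::real_normed_vector \<Rightarrow> real"
  assumes "g differentiable at q"
  shows "partial e (\<lambda>x. c * g x) q = c * partial e g q"
  using has_derivative_imp_partial[OF has_derivative_mult_right[OF has_derivative_frechet_derivative[OF assms]]]
  by simp

lemma partial_compose_real:
  fixes g :: "'v::real_normed_vector \<Rightarrow> real"
  assumes "(\<Phi> has_real_derivative d) (at (g q))" "g differentiable at q"
  shows "partial e (\<lambda>x. \<Phi> (g x)) q = d * partial e g q"
  using has_derivative_imp_partial[OF DERIV_compose_FDERIV[OF assms(1)
        has_derivative_frechet_derivative[OF assms(2)]]]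
  by (simp add: mult.commute)

lemma partial_compose:
  fixes U :: "'c::euclidean_space \<Rightarrow> real" and \<phi> :: "'v::euclidean_space \<Rightarrow> 'c"
  assumes "\<phi> differentiable at q" "U differentiable at (\<phi> q)"
  shows "partial e (\<lambda>x. U (\<phi> x)) q = (\<Sum>i\<in>Basis. partial e (\<lambda>x. \<phi> x \<bullet> i) q * partial i U (\<phi> q))"
proof -
  let ?D\<phi> = "frechet_derivative \<phi> (at q) e"
  have component: "partial e (\<lambda>x. \<phi> x \<bullet> i) q = ?D\<phi> \<bullet> i" for i
    using has_derivative_imp_partial[OF has_derivative_inner_left[OF
        has_derivative_frechet_derivative[OF assms(1)]]] by simp
  have "linear (frechet_derivative U (at (\<phi> q)))"
    using linear_frechet_derivative assms(2) by blast
  then have "frechet_derivative U (at (\<phi> q)) (\<Sum>i\<in>Basis. (?D\<phi> \<bullet> i) *\<^sub>R i)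
      = (\<Sum>i\<in>Basis. (?D\<phi> \<bullet> i) * partial i U (\<phi> q))"
    by (simp add: linear_sum linear_cmul)
  then show ?thesis
    using frechet_derivative_compose[OF assms] component
    by (simp add: o_def euclidean_representation)
qed

lemma has_real_derivative_along_line:
  fixes g :: "'v::real_normed_vector \<Rightarrow> real"
  assumes "g differentiable at (a + s *\<^sub>R e)"
  shows "((\<lambda>t. g (a + t *\<^sub>R e)) has_real_derivative partial e g (a + s *\<^sub>R e)) (at s)"
proof -
  let ?D = "frechet_derivative g (at (a + s *\<^sub>R e))"
  have "((\<lambda>t. a + t *\<^sub>R e) has_derivative (\<lambda>t. t *\<^sub>R e)) (at s)"
    by (auto intro!: derivative_eq_intros)
  from has_derivative_compose[OF this has_derivative_frechet_derivative[OF assms]]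
  have "((\<lambda>t. g (a + t *\<^sub>R e)) has_derivative (\<lambda>t. ?D (t *\<^sub>R e))) (at s)" .
  moreover have "(\<lambda>t. ?D (t *\<^sub>R e)) = (*) (?D e)"
    using linear_frechet_derivative[OF assms] by (auto simp: linear_cmul)
  ultimately show ?thesis unfolding has_field_derivative_def by simp
qed

lemma inner_grad_Basis:
  assumes "e \<in> Basis"
  shows "grad g q \<bullet> e = partial e g q"
proof -
  have "grad g q \<bullet> e = (\<Sum>i\<in>Basis. if i = e then partial i g q else 0)"
    unfolding grad_def inner_sum_left using assms by (intro sum.cong refl) (simp add: inner_Basis)
  then show ?thesis using assms by simp
qed

lemma inner_grad: "grad g q \<bullet> grad h q = (\<Sum>i\<in>Basis. partial i g q * partial i h q)"
  by (subst euclidean_inner) (intro sum.cong refl, simp add: inner_grad_Basis)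

lemma norm_grad_sq: "(norm (grad g q))\<^sup>2 = (\<Sum>i\<in>Basis. (partial i g q)\<^sup>2)"
  unfolding power2_norm_eq_inner inner_grad by (simp add: power2_eq_square)

lemma lap_cong_open:
  assumes "open S" "q \<in> S" "\<And>x. x \<in> S \<Longrightarrow> g x = h x"
  shows "lap g q = lap h q"
proof -
  have "partial i g x = partial i h x" if "x \<in> S" for i x
    using partial_cong_open[OF assms(1) that assms(3)] .
  then show ?thesis
    unfolding lap_def hess_def by (intro sum.cong refl partial_cong_open[OF assms(1,2)])
qed

lemma sum_sq_diff_diagonal:
  fixes X :: "'i \<Rightarrow> 'i \<Rightarrow> real"
  assumes "finite I"
  shows "(\<Sum>i\<in>I. \<Sum>j\<in>I. (X i j - (if i = j then c else 0))\<^sup>2)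
       = (\<Sum>i\<in>I. \<Sum>j\<in>I. (X i j)\<^sup>2) - 2 * c * (\<Sum>i\<in>I. X i i) + real (card I) * c\<^sup>2"
proof -
  have "(X i j - (if i = j then c else 0))\<^sup>2 = (X i j)\<^sup>2 - (if i = j then 2 * c * X i i - c\<^sup>2 else 0)" for i j
    by (auto simp: power2_eq_square algebra_simps)
  then have "(\<Sum>i\<in>I. \<Sum>j\<in>I. (X i j - (if i = j then c else 0))\<^sup>2)
     = (\<Sum>i\<in>I. (\<Sum>j\<in>I. (X i j)\<^sup>2) - (2 * c * X i i - c\<^sup>2))"
    using assms by (simp add: sum_subtractf)
  also have "\<dots> = (\<Sum>i\<in>I. \<Sum>j\<in>I. (X i j)\<^sup>2) - 2 * c * (\<Sum>i\<in>I. X i i) + real (card I) * c\<^sup>2"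
    by (simp add: sum_subtractf sum.distrib sum_distrib_left)
  finally show ?thesis .
qed

lemma tf_hess_sq_eq:
  fixes g :: "'v::euclidean_space \<Rightarrow> real"
  shows "tf_hess_sq g p = (\<Sum>i\<in>Basis. \<Sum>j\<in>Basis. (hess g p i j)\<^sup>2) - (lap g p)\<^sup>2 / real DIM('v)"
proof -
  have "(\<Sum>i\<in>Basis. hess g p i i) = lap g p" by (simp add: lap_def)
  moreover have "real DIM('v) \<noteq> 0" by simp
  ultimately show ?thesis
    unfolding tf_hess_sq_def sum_sq_diff_diagonal[OF finite_Basis]
    by (simp add: power2_eq_square field_simps)
qed

section \<open>Functions of class \<open>C\<^sup>k\<close>\<close>

lemma Ck_on_cong:
  assumes "Ck_on k g S" "open S" "\<And>x. x \<in> S \<Longrightarrow> g x = h x"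
  shows "Ck_on k h S"
  using assms
proof (induction k arbitrary: g h)
  case 0
  then show ?case by (simp cong: continuous_on_cong)
next
  case (Suc k)
  have "h differentiable_on S"
    using Suc.prems differentiable_cong_open
    by (metis Ck_on.simps(2) differentiable_on_eq_differentiable_at)
  moreover have "continuous_on S h"
    using Suc.prems by (auto cong: continuous_on_cong)
  moreover have "Ck_on k (partial e h) S" if "e \<in> Basis" for e
  proof (rule Suc.IH)
    show "Ck_on k (partial e g) S" using Suc.prems that by simp
    show "partial e g x = partial e h x" if "x \<in> S" for x
      using partial_cong_open[OF \<open>open S\<close> that Suc.prems(3)] .
  qed (use Suc.prems in simp)
  ultimately show ?case by simp
qed

lemma Ck_on_SucD: "Ck_on (Suc k) g S \<Longrightarrow> Ck_on k g S"
proof (induction k arbitrary: g)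
  case 0
  then show ?case by simp
next
  case (Suc k)
  then show ?case by (metis Ck_on.simps(2))
qed

lemma Ck_on_imp_differentiable:
  "Ck_on (Suc k) g S \<Longrightarrow> open S \<Longrightarrow> q \<in> S \<Longrightarrow> g differentiable at q"
  using differentiable_on_eq_differentiable_at by auto

lemma Ck_on_const: "Ck_on k (\<lambda>q. c) S"
  by (induction k arbitrary: c) auto

lemma Ck_on_inner: "Ck_on k (\<lambda>q. q \<bullet> c) S"
proof (induction k)
  case 0
  show ?case by (auto intro: continuous_intros)
next
  case (Suc k)
  have "partial e (\<lambda>q. q \<bullet> c) x = e \<bullet> c" for e x
    by (rule has_derivative_imp_partial) (auto intro!: derivative_eq_intros)
  then show ?case
    by (auto simp: Ck_on_const differentiable_on_def intro!: continuous_intros derivative_intros)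
qed

lemma Ck_on_add:
  assumes "Ck_on k g S" "Ck_on k h S" "open S"
  shows "Ck_on k (\<lambda>x. g x + h x) S"
  using assms
proof (induction k arbitrary: g h)
  case 0
  then show ?case by (auto intro: continuous_intros)
next
  case (Suc k)
  have "Ck_on k (partial e (\<lambda>x. g x + h x)) S" if "e \<in> Basis" for e
  proof (rule Ck_on_cong[OF _ \<open>open S\<close>])
    show "Ck_on k (\<lambda>q. partial e g q + partial e h q) S"
      using Suc that by auto
    show "partial e g x + partial e h x = partial e (\<lambda>x. g x + h x) x" if "x \<in> S" for x
      using partial_add Ck_on_imp_differentiable Suc.prems that by metis
  qed
  then show ?case
    using Suc.prems by (auto intro: continuous_intros derivative_intros)
qed

lemma Ck_on_mult:
  fixes g h :: "'v::euclidean_space \<Rightarrow> real"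
  assumes "Ck_on k g S" "Ck_on k h S" "open S"
  shows "Ck_on k (\<lambda>x. g x * h x) S"
  using assms
proof (induction k arbitrary: g h)
  case 0
  then show ?case by (auto intro: continuous_intros)
next
  case (Suc k)
  have g: "Ck_on k g S" and h: "Ck_on k h S"
    using Suc.prems Ck_on_SucD by blast+
  have "Ck_on k (partial e (\<lambda>x. g x * h x)) S" if e: "e \<in> Basis" for e
  proof (rule Ck_on_cong[OF _ \<open>open S\<close>])
    show "Ck_on k (\<lambda>q. partial e g q * h q + g q * partial e h q) S"
      using Suc.prems e g h by (intro Ck_on_add Suc.IH) auto
    show "partial e g x * h x + g x * partial e h x = partial e (\<lambda>x. g x * h x) x" if "x \<in> S" for x
      using partial_mult Ck_on_imp_differentiable Suc.prems that by metis
  qed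
  then show ?case
    using Suc.prems by (auto intro: continuous_intros derivative_intros)
qed

lemma Ck_on_sum:
  fixes g :: "'i \<Rightarrow> 'v::euclidean_space \<Rightarrow> real"
  assumes "finite I" "\<And>i. i \<in> I \<Longrightarrow> Ck_on k (g i) S" "open S"
  shows "Ck_on k (\<lambda>x. \<Sum>i\<in>I. g i x) S"
  using assms by (induction I rule: finite_induct) (simp_all add: Ck_on_const Ck_on_add)

lemma differentiable_componentwise_at:
  fixes \<phi> :: "'v::euclidean_space \<Rightarrow> 'c::euclidean_space"
  assumes "\<And>i. i \<in> Basis \<Longrightarrow> (\<lambda>x. \<phi> x \<bullet> i) differentiable at q"
  shows "\<phi> differentiable at q"
proof -
  have "(\<lambda>x. \<Sum>i\<in>Basis. (\<phi> x \<bullet> i) *\<^sub>R i) differentiable at q"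
    using assms by (auto intro!: derivative_intros)
  then show ?thesis by (simp add: euclidean_representation)
qed

lemma Ck_on_compose:
  fixes U :: "'c::euclidean_space \<Rightarrow> real" and \<phi> :: "'v::euclidean_space \<Rightarrow> 'c"
  assumes "Ck_on k U T" "open T" "open S" "\<phi> ` S \<subseteq> T"
    and "\<forall>i\<in>Basis. Ck_on k (\<lambda>q. \<phi> q \<bullet> i) S"
  shows "Ck_on k (\<lambda>q. U (\<phi> q)) S"
  using assms
proof (induction k arbitrary: U)
  case 0
  then have "continuous_on S \<phi>" "continuous_on T U"
    by (simp_all add: continuous_on_componentwise[of S \<phi>])
  then show ?case using continuous_on_compose2[OF _ _ 0(4)] by simp
next
  case (Suc k)
  have d\<phi>: "\<phi> differentiable at q" if "q \<in> S" for q
    using Suc.prems(5) Ck_on_imp_differentiable[OF _ \<open>open S\<close> that]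
    by (blast intro: differentiable_componentwise_at)
  have dU: "U differentiable at (\<phi> q)" if "q \<in> S" for q
    using Suc.prems(4) that Ck_on_imp_differentiable[OF Suc.prems(1,2)] by blast
  have \<phi>: "\<forall>i\<in>Basis. Ck_on k (\<lambda>q. \<phi> q \<bullet> i) S"
    using Suc.prems(5) Ck_on_SucD by blast
  have "Ck_on k (partial e (\<lambda>x. U (\<phi> x))) S" if e: "e \<in> Basis" for e
  proof (rule Ck_on_cong[OF _ \<open>open S\<close>])
    show "Ck_on k (\<lambda>q. \<Sum>i\<in>Basis. partial e (\<lambda>x. \<phi> x \<bullet> i) q * partial i U (\<phi> q)) S"
    proof (intro Ck_on_sum Ck_on_mult finite_Basis \<open>open S\<close>)
      fix i :: 'c assume i: "i \<in> Basis"
      show "Ck_on k (partial e (\<lambda>x. \<phi> x \<bullet> i)) S"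
        using Suc.prems(5) i e by simp
      show "Ck_on k (\<lambda>q. partial i U (\<phi> q)) S"
        using Suc.prems i \<phi> by (intro Suc.IH) auto
    qed
    show "(\<Sum>i\<in>Basis. partial e (\<lambda>x. \<phi> x \<bullet> i) x * partial i U (\<phi> x)) = partial e (\<lambda>x. U (\<phi> x)) x"
      if "x \<in> S" for x
      using partial_compose[OF d\<phi>[OF that] dU[OF that]] by simp
  qed
  moreover have "(\<lambda>x. U (\<phi> x)) differentiable_on S"
    using differentiable_chain_at[OF d\<phi> dU] \<open>open S\<close>
    by (simp add: differentiable_on_eq_differentiable_at o_def)
  ultimately show ?case using differentiable_imp_continuous_on by simp
qed

lemma Ck_on_derivative_sequence:
  fixes \<Phi> :: "nat \<Rightarrow> real \<Rightarrow> real"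
  assumes "open T" "\<And>j x. x \<in> T \<Longrightarrow> (\<Phi> j has_real_derivative \<Phi> (Suc j) x) (at x)"
  shows "Ck_on k (\<Phi> j) T"
  using assms(2)
proof (induction k arbitrary: j)
  case 0
  then have "\<forall>x\<in>T. isCont (\<Phi> j) x" using DERIV_isCont by blast
  then show ?case by (simp add: continuous_at_imp_continuous_on)
next
  case (Suc k)
  have deriv: "partial 1 (\<Phi> j) x = \<Phi> (Suc j) x" if "x \<in> T" for x
    using has_derivative_imp_partial[OF Suc.prems[OF that, unfolded has_field_derivative_def]] by simp
  have "Ck_on k (partial 1 (\<Phi> j)) T"
    by (rule Ck_on_cong[OF Suc.IH \<open>open T\<close>]) (use Suc.prems deriv in auto)
  moreover have "\<Phi> j differentiable_on T"
    using Suc.prems \<open>open T\<close> real_differentiable_def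
    by (metis differentiableI differentiable_on_eq_differentiable_at)
  ultimately show ?case using differentiable_imp_continuous_on by auto
qed

lemma Ck_on_powr:
  fixes g :: "'v::euclidean_space \<Rightarrow> real"
  assumes "Ck_on k g S" "open S" "\<And>x. x \<in> S \<Longrightarrow> g x > 0"
  shows "Ck_on k (\<lambda>x. g x powr a) S"
proof -
  define \<Phi> where "\<Phi> = (\<lambda>j (x::real). (\<Prod>i<j. (a - real i)) * x powr (a - real j))"
  have deriv: "(\<Phi> j has_real_derivative \<Phi> (Suc j) x) (at x)" if "x > 0" for j x
  proof -
    have "(\<Phi> j has_real_derivative (\<Prod>i<j. (a - real i)) * ((a - real j) * x powr (a - real j - 1))) (at x)"
      unfolding \<Phi>_def by (intro DERIV_cmult has_real_derivative_powr that)
    moreover have "a - real j - 1 = a - real (Suc j)" by simp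
    ultimately show ?thesis
      by (simp add: \<Phi>_def prod.lessThan_Suc mult_ac)
  qed
  have "Ck_on k (\<Phi> 0) {0<..}"
    by (rule Ck_on_derivative_sequence[where \<Phi> = \<Phi> and j = 0]) (auto intro: deriv)
  then have "Ck_on k (\<lambda>x. \<Phi> 0 (g x)) S"
    using assms by (intro Ck_on_compose[where T = "{0<..}" and U = "\<Phi> 0" and \<phi> = g]) auto
  then show ?thesis unfolding \<Phi>_def by simp
qed

lemma smooth_on_partial: "smooth_on g S \<Longrightarrow> e \<in> Basis \<Longrightarrow> smooth_on (partial e g) S"
  unfolding smooth_on_def by (metis Ck_on.simps(2))

lemma smooth_on_imp_differentiable:
  "smooth_on g S \<Longrightarrow> open S \<Longrightarrow> q \<in> S \<Longrightarrow> g differentiable at q"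
  unfolding smooth_on_def using Ck_on_imp_differentiable by blast

lemma smooth_on_mult:
  fixes g h :: "'v::euclidean_space \<Rightarrow> real"
  shows "smooth_on g S \<Longrightarrow> smooth_on h S \<Longrightarrow> open S \<Longrightarrow> smooth_on (\<lambda>x. g x * h x) S"
  unfolding smooth_on_def by (simp add: Ck_on_mult)

lemma smooth_on_sum:
  fixes g :: "'i \<Rightarrow> 'v::euclidean_space \<Rightarrow> real"
  shows "finite I \<Longrightarrow> (\<And>i. i \<in> I \<Longrightarrow> smooth_on (g i) S) \<Longrightarrow> open S
    \<Longrightarrow> smooth_on (\<lambda>x. \<Sum>i\<in>I. g i x) S"
  unfolding smooth_on_def by (simp add: Ck_on_sum)

lemma smooth_on_powr:
  fixes g :: "'v::euclidean_space \<Rightarrow> real"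
  shows "smooth_on g S \<Longrightarrow> open S \<Longrightarrow> (\<And>x. x \<in> S \<Longrightarrow> g x > 0) \<Longrightarrow> smooth_on (\<lambda>x. g x powr a) S"
  unfolding smooth_on_def by (simp add: Ck_on_powr)

lemma lap_cmult:
  assumes "smooth_on g S" "open S" "p \<in> S"
  shows "lap (\<lambda>x. c * g x) p = c * lap g p"
proof -
  have "partial j (partial j (\<lambda>x. c * g x)) p = c * partial j (partial j g) p" if "j \<in> Basis" for j
  proof -
    have "partial j (partial j (\<lambda>x. c * g x)) p = partial j (\<lambda>x. c * partial j g x) p"
      by (rule partial_cong_open[OF assms(2,3) partial_cmult[OF smooth_on_imp_differentiable[OF assms(1,2)]]])
    also have "\<dots> = c * partial j (partial j g) p"
      by (rule partial_cmult[OF smooth_on_imp_differentiable[OF smooth_on_partial[OF assms(1) that] assms(2,3)]])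
    finally show ?thesis .
  qed
  then show ?thesis by (simp add: lap_def hess_def sum_distrib_left)
qed

section \<open>Symmetry of second derivatives\<close>

lemma mixed_difference_mvt:
  fixes g :: "'v::real_normed_vector \<Rightarrow> real"
  assumes h: "h > 0"
    and inS: "\<And>s t. 0 \<le> s \<Longrightarrow> s \<le> h \<Longrightarrow> 0 \<le> t \<Longrightarrow> t \<le> h \<Longrightarrow> p + s *\<^sub>R i + t *\<^sub>R j \<in> S"
    and dg: "\<And>q. q \<in> S \<Longrightarrow> g differentiable at q"
    and di: "\<And>q. q \<in> S \<Longrightarrow> partial i g differentiable at q"
  shows "\<exists>s t. 0 < s \<and> s < h \<and> 0 < t \<and> t < h \<and>
     g (p + h *\<^sub>R i + h *\<^sub>R j) - g (p + h *\<^sub>R i) - g (p + h *\<^sub>R j) + g p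
       = h * h * partial j (partial i g) (p + s *\<^sub>R i + t *\<^sub>R j)"
proof -
  define \<phi> where "\<phi> = (\<lambda>s. g ((p + h *\<^sub>R j) + s *\<^sub>R i) - g (p + s *\<^sub>R i))"
  have "DERIV \<phi> s :> partial i g ((p + h *\<^sub>R j) + s *\<^sub>R i) - partial i g (p + s *\<^sub>R i)"
    if "0 \<le> s" "s \<le> h" for s
  proof -
    have "(p + h *\<^sub>R j) + s *\<^sub>R i \<in> S" "p + s *\<^sub>R i \<in> S"
      using inS[of s h] inS[of s 0] that h by (simp_all add: add_ac)
    then show ?thesis
      unfolding \<phi>_def by (intro DERIV_diff has_real_derivative_along_line dg)
  qed
  from MVT2[OF h this] obtain s where s: "0 < s" "s < h"
    "\<phi> h - \<phi> 0 = h * (partial i g ((p + h *\<^sub>R j) + s *\<^sub>R i) - partial i g (p + s *\<^sub>R i))"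
    by auto
  define \<psi> where "\<psi> = (\<lambda>t. partial i g ((p + s *\<^sub>R i) + t *\<^sub>R j))"
  have "DERIV \<psi> t :> partial j (partial i g) ((p + s *\<^sub>R i) + t *\<^sub>R j)" if "0 \<le> t" "t \<le> h" for t
  proof -
    have "(p + s *\<^sub>R i) + t *\<^sub>R j \<in> S" using inS[of s t] that s by simp
    then show ?thesis
      unfolding \<psi>_def by (intro has_real_derivative_along_line di)
  qed
  from MVT2[OF h this] obtain t where t: "0 < t" "t < h"
    "\<psi> h - \<psi> 0 = h * partial j (partial i g) ((p + s *\<^sub>R i) + t *\<^sub>R j)"
    by auto
  have "g (p + h *\<^sub>R i + h *\<^sub>R j) - g (p + h *\<^sub>R i) - g (p + h *\<^sub>R j) + g p = \<phi> h - \<phi> 0"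
    unfolding \<phi>_def by (simp add: add_ac)
  also have "\<dots> = h * (\<psi> h - \<psi> 0)"
    using s(3) unfolding \<psi>_def by (simp add: add_ac)
  also have "\<dots> = h * h * partial j (partial i g) (p + s *\<^sub>R i + t *\<^sub>R j)"
    using t(3) by simp
  finally show ?thesis using s(1,2) t(1,2) by blast
qed

lemma small_parallelogram:
  fixes p i j :: "'v::real_normed_vector"
  assumes "r > 0"
  obtains h where "h > 0"
    "\<And>s t. 0 \<le> s \<Longrightarrow> s \<le> h \<Longrightarrow> 0 \<le> t \<Longrightarrow> t \<le> h \<Longrightarrow> dist (p + s *\<^sub>R i + t *\<^sub>R j) p < r"
proof -
  define c where "c = norm i + norm j + 1"
  have c: "c > 0" "norm i + norm j < 2 * c"
    unfolding c_def by (simp_all add: add_nonneg_pos)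
  define h where "h = r / (2 * c)"
  have h: "h > 0" using c assms by (simp add: h_def)
  have "dist (p + s *\<^sub>R i + t *\<^sub>R j) p < r" if "0 \<le> s" "s \<le> h" "0 \<le> t" "t \<le> h" for s t
  proof -
    have "dist (p + s *\<^sub>R i + t *\<^sub>R j) p \<le> s * norm i + t * norm j"
      using norm_triangle_ineq[of "s *\<^sub>R i" "t *\<^sub>R j"] that by (simp add: dist_norm add.assoc)
    also have "\<dots> \<le> h * (norm i + norm j)"
      using that by (simp add: distrib_left add_mono mult_right_mono)
    also have "\<dots> < h * (2 * c)"
      using c h by (intro mult_strict_left_mono)
    also have "\<dots> = r"
      using c by (simp add: h_def)
    finally show ?thesis .
  qed
  with h show ?thesis using that by blast
qed

lemma partial_commute:
  fixes g :: "'v::real_normed_vector \<Rightarrow> real"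
  assumes S: "open S" "p \<in> S"
    and dg: "\<And>q. q \<in> S \<Longrightarrow> g differentiable at q"
    and di: "\<And>q. q \<in> S \<Longrightarrow> partial i g differentiable at q"
    and dj: "\<And>q. q \<in> S \<Longrightarrow> partial j g differentiable at q"
    and ci: "continuous_on S (partial j (partial i g))"
    and cj: "continuous_on S (partial i (partial j g))"
  shows "partial j (partial i g) p = partial i (partial j g) p"
proof (rule ccontr)
  define A where "A = partial j (partial i g)"
  define B where "B = partial i (partial j g)"
  assume neq: "\<not> ?thesis"
  define e where "e = \<bar>A p - B p\<bar> / 2"
  have e: "e > 0" using neq unfolding e_def A_def B_def by simp
  have "isCont A p" "isCont B p"
    using ci cj S continuous_on_eq_continuous_at unfolding A_def B_def by blast+
  then obtain d1 d2 where
    d1: "d1 > 0" "\<And>q. dist q p < d1 \<Longrightarrow> dist (A q) (A p) < e" and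
    d2: "d2 > 0" "\<And>q. dist q p < d2 \<Longrightarrow> dist (B q) (B p) < e"
    using e unfolding continuous_at_eps_delta by blast
  obtain r where r: "r > 0" "ball p r \<subseteq> S"
    using S open_contains_ball by blast
  have "min r (min d1 d2) > 0" using r d1 d2 by simp
  then obtain h where h: "h > 0" and near: "\<And>s t. 0 \<le> s \<Longrightarrow> s \<le> h \<Longrightarrow> 0 \<le> t \<Longrightarrow> t \<le> h
      \<Longrightarrow> dist (p + s *\<^sub>R i + t *\<^sub>R j) p < min r (min d1 d2)"
    by (rule small_parallelogram[where p = p and i = i and j = j]) blast
  have inS: "p + s *\<^sub>R i + t *\<^sub>R j \<in> S" if "0 \<le> s" "s \<le> h" "0 \<le> t" "t \<le> h" for s t
    using near[OF that] r(2) by (auto simp: dist_commute)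
  have inS': "p + s *\<^sub>R j + t *\<^sub>R i \<in> S" if "0 \<le> s" "s \<le> h" "0 \<le> t" "t \<le> h" for s t
    using inS[OF that(3,4,1,2)] by (simp add: add_ac)
  obtain s1 t1 where st1: "0 < s1" "s1 < h" "0 < t1" "t1 < h"
    "g (p + h *\<^sub>R i + h *\<^sub>R j) - g (p + h *\<^sub>R i) - g (p + h *\<^sub>R j) + g p
       = h * h * A (p + s1 *\<^sub>R i + t1 *\<^sub>R j)"
    using mixed_difference_mvt[OF h inS dg di] unfolding A_def by blast
  obtain s2 t2 where st2: "0 < s2" "s2 < h" "0 < t2" "t2 < h"
    "g (p + h *\<^sub>R j + h *\<^sub>R i) - g (p + h *\<^sub>R j) - g (p + h *\<^sub>R i) + g p
       = h * h * B (p + s2 *\<^sub>R j + t2 *\<^sub>R i)"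
    using mixed_difference_mvt[OF h inS' dg dj] unfolding B_def by blast
  have "g (p + h *\<^sub>R j + h *\<^sub>R i) = g (p + h *\<^sub>R i + h *\<^sub>R j)"
    by (simp add: add_ac)
  then have "h * h * A (p + s1 *\<^sub>R i + t1 *\<^sub>R j) = h * h * B (p + s2 *\<^sub>R j + t2 *\<^sub>R i)"
    using st1(5) st2(5) by linarith
  then have "A (p + s1 *\<^sub>R i + t1 *\<^sub>R j) = B (p + s2 *\<^sub>R j + t2 *\<^sub>R i)"
    using h by simp
  moreover have "\<bar>A (p + s1 *\<^sub>R i + t1 *\<^sub>R j) - A p\<bar> < e"
    using d1(2) near[of s1 t1] st1 by (simp add: dist_real_def)
  moreover have "\<bar>B (p + s2 *\<^sub>R j + t2 *\<^sub>R i) - B p\<bar> < e"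
    using d2(2) near[of t2 s2] st2 by (simp add: dist_real_def add_ac)
  ultimately have "\<bar>A p - B p\<bar> < 2 * e" by linarith
  then show False unfolding e_def by simp
qed

lemma smooth_on_partial_commute:
  fixes g :: "'v::euclidean_space \<Rightarrow> real"
  assumes "smooth_on g S" "open S" "q \<in> S" "i \<in> Basis" "j \<in> Basis"
  shows "partial j (partial i g) q = partial i (partial j g) q"
proof (rule partial_commute[OF assms(2,3)])
  have gi: "smooth_on (partial i g) S" and gj: "smooth_on (partial j g) S"
    using smooth_on_partial assms by blast+
  show "g differentiable at x" "partial i g differentiable at x" "partial j g differentiable at x"
    if "x \<in> S" for x
    using smooth_on_imp_differentiable assms(1,2) gi gj that by blast+
  show "continuous_on S (partial j (partial i g))" "continuous_on S (partial i (partial j g))"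
    using smooth_on_partial[OF gi assms(5)] smooth_on_partial[OF gj assms(4)]
    unfolding smooth_on_def by (metis Ck_on.simps(1))+
qed

section \<open>The identity for a smooth positive function\<close>

text \<open>The identity in terms of \<open>\<beta> = b\<close>, \<open>g = |\<nabla>b|\<^sup>2\<close>, \<open>L = \<Delta>b\<close>,
  \<open>P = \<langle>Hess b \<nabla>b, \<nabla>b\<rangle>\<close>, \<open>Q = |Hess b|\<^sup>2\<close> and \<open>R = \<langle>\<nabla>b, \<nabla>\<Delta>b\<rangle>\<close>.\<close>

lemma grad_energy_algebra:
  fixes m \<beta> g L P Q R :: real
  assumes m: "m \<noteq> 0" "m \<noteq> 2" and \<beta>: "\<beta> \<noteq> 0"
  shows "2 * m * (2 * Q + 2 * R) + 2 * (2 - m) * (2 * (2 * m) * P / \<beta>)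
    = m / \<beta>\<^sup>2 * (4 * g\<^sup>2 + 8 * \<beta> * P + 4 * \<beta>\<^sup>2 * Q - 4 * (g + \<beta> * L)\<^sup>2 / m)
      + 4 * m / (2 - m) * ((2 - m) * (g * L + \<beta> * R + 2 * (1 - m) * P) / \<beta>)
      + 2 * (2 * m * g) * ((2 - m) * (\<beta> * L + (1 - m) * g)) / ((2 - m) * \<beta>\<^sup>2)
      + 4 * ((2 - m) * (\<beta> * L + (1 - m) * g))\<^sup>2 / ((2 - m)\<^sup>2 * \<beta>\<^sup>2)"
proof -
  have "m / \<beta>\<^sup>2 * (4 * g\<^sup>2 + 8 * \<beta> * P + 4 * \<beta>\<^sup>2 * Q - 4 * (g + \<beta> * L)\<^sup>2 / m)
      + 4 * m * (g * L + \<beta> * R + 2 * (1 - m) * P) / \<beta>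
      + 4 * m * g * (\<beta> * L + (1 - m) * g) / \<beta>\<^sup>2
      + 4 * (\<beta> * L + (1 - m) * g)\<^sup>2 / \<beta>\<^sup>2
      = 2 * m * (2 * Q + 2 * R) + 2 * (2 - m) * (2 * (2 * m) * P / \<beta>)"
    using m(1) \<beta> by (simp add: field_simps power2_eq_square)
  moreover have "2 - m \<noteq> 0" using m(2) by simp
  ultimately show ?thesis
    by (simp add: power_mult_distrib mult.assoc)
qed

context
  fixes b :: "'v::euclidean_space \<Rightarrow> real" and S :: "'v set"
  assumes open_S: "open S" and smooth_b: "smooth_on b S" and b_pos: "\<And>q. q \<in> S \<Longrightarrow> 0 < b q"
begin

lemma smooth_partial_b: "i \<in> Basis \<Longrightarrow> smooth_on (partial i b) S"
  by (rule smooth_on_partial[OF smooth_b])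

lemma smooth_second_partial_b: "i \<in> Basis \<Longrightarrow> j \<in> Basis \<Longrightarrow> smooth_on (partial j (partial i b)) S"
  by (rule smooth_on_partial[OF smooth_partial_b])

lemma differentiable_b: "q \<in> S \<Longrightarrow> b differentiable at q"
  by (rule smooth_on_imp_differentiable[OF smooth_b open_S])

lemma differentiable_partial_b: "q \<in> S \<Longrightarrow> i \<in> Basis \<Longrightarrow> partial i b differentiable at q"
  by (rule smooth_on_imp_differentiable[OF smooth_partial_b open_S])

lemma differentiable_second_partial_b:
  "q \<in> S \<Longrightarrow> i \<in> Basis \<Longrightarrow> j \<in> Basis \<Longrightarrow> partial j (partial i b) differentiable at q"
  by (rule smooth_on_imp_differentiable[OF smooth_second_partial_b open_S])

lemma smooth_lap_b: "smooth_on (lap b) S"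
  unfolding lap_def[abs_def] hess_def
  by (auto intro!: smooth_on_sum smooth_second_partial_b open_S)

lemma smooth_norm_grad_sq_b: "smooth_on (\<lambda>q. (norm (grad b q))\<^sup>2) S"
proof -
  have "smooth_on (\<lambda>q. \<Sum>i\<in>Basis. partial i b q * partial i b q) S"
    by (auto intro!: smooth_on_sum smooth_on_mult smooth_partial_b open_S)
  then show ?thesis unfolding norm_grad_sq by (simp add: power2_eq_square)
qed

lemma third_partial_commute_b:
  assumes p: "p \<in> S" and i: "i \<in> Basis" and j: "j \<in> Basis"
  shows "partial j (partial j (partial i b)) p = partial i (partial j (partial j b)) p"
proof -
  have "partial j (partial j (partial i b)) p = partial j (partial i (partial j b)) p"
    by (rule partial_cong_open[OF open_S p smooth_on_partial_commute[OF smooth_b open_S _ i j]])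
  also have "\<dots> = partial i (partial j (partial j b)) p"
    by (rule smooth_on_partial_commute[OF smooth_partial_b[OF j] open_S p i j])
  finally show ?thesis .
qed

lemma partial_lap_b:
  assumes p: "p \<in> S" and "i \<in> Basis"
  shows "partial i (lap b) p = (\<Sum>j\<in>Basis. partial i (partial j (partial j b)) p)"
proof -
  have "((\<lambda>q. \<Sum>j\<in>Basis. partial j (partial j b) q) has_derivative
      (\<lambda>h. \<Sum>j\<in>Basis. partial h (partial j (partial j b)) p)) (at p)"
    by (auto intro!: has_derivative_sum has_derivative_frechet_derivative
        differentiable_second_partial_b p)
  then show ?thesis
    unfolding lap_def[abs_def] hess_def by (simp add: has_derivative_imp_partial)
qed

lemma partial_norm_grad_sq_b:
  assumes q: "q \<in> S"
  shows "partial j (\<lambda>q. (norm (grad b q))\<^sup>2) q = 2 * (\<Sum>i\<in>Basis. partial i b q * partial j (partial i b) q)"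
proof -
  have "((\<lambda>q. \<Sum>i\<in>Basis. (partial i b q)\<^sup>2) has_derivative
      (\<lambda>h. \<Sum>i\<in>Basis. 2 * (partial i b q * partial h (partial i b) q))) (at q)"
    using differentiable_partial_b[OF q]
    by (auto intro!: derivative_eq_intros has_derivative_frechet_derivative simp: power2_eq_square)
  then show ?thesis
    unfolding norm_grad_sq by (simp add: has_derivative_imp_partial sum_distrib_left)
qed

text \<open>The symmetry of third derivatives turns
  \<open>\<Sum>\<^sub>j \<partial>\<^sub>j \<partial>\<^sub>j \<partial>\<^sub>i b\<close> into \<open>\<partial>\<^sub>i \<Delta> b\<close>.\<close>

lemma lap_norm_grad_sq_b:
  assumes p: "p \<in> S"
  shows "lap (\<lambda>q. (norm (grad b q))\<^sup>2) p
    = 2 * (\<Sum>i\<in>Basis. \<Sum>j\<in>Basis. (hess b p i j)\<^sup>2) + 2 * (grad b p \<bullet> grad (lap b) p)"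
proof -
  have second: "partial j (partial j (\<lambda>q. (norm (grad b q))\<^sup>2)) p
      = 2 * (\<Sum>i\<in>Basis. (partial j (partial i b) p)\<^sup>2 + partial i b p * partial j (partial j (partial i b)) p)"
    if j: "j \<in> Basis" for j
  proof -
    have "((\<lambda>q. 2 * (\<Sum>i\<in>Basis. partial i b q * partial j (partial i b) q)) has_derivative
        (\<lambda>h. 2 * (\<Sum>i\<in>Basis. partial h (partial i b) p * partial j (partial i b) p
                              + partial i b p * partial h (partial j (partial i b)) p))) (at p)"
      using differentiable_partial_b[OF p] differentiable_second_partial_b[OF p _ j]
      by (auto intro!: derivative_eq_intros has_derivative_frechet_derivative simp: algebra_simps)
    then have "partial j (\<lambda>q. 2 * (\<Sum>i\<in>Basis. partial i b q * partial j (partial i b) q)) p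
      = 2 * (\<Sum>i\<in>Basis. (partial j (partial i b) p)\<^sup>2 + partial i b p * partial j (partial j (partial i b)) p)"
      by (simp add: has_derivative_imp_partial power2_eq_square)
    moreover have "partial j (partial j (\<lambda>q. (norm (grad b q))\<^sup>2)) p
      = partial j (\<lambda>q. 2 * (\<Sum>i\<in>Basis. partial i b q * partial j (partial i b) q)) p"
      by (rule partial_cong_open[OF open_S p partial_norm_grad_sq_b])
    ultimately show ?thesis by simp
  qed
  have third: "(\<Sum>j\<in>Basis. \<Sum>i\<in>Basis. partial i b p * partial j (partial j (partial i b)) p)
      = (\<Sum>i\<in>Basis. partial i b p * partial i (lap b) p)"
  proof -
    have "(\<Sum>j\<in>Basis. \<Sum>i\<in>Basis. partial i b p * partial j (partial j (partial i b)) p)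
        = (\<Sum>i\<in>Basis. \<Sum>j\<in>Basis. partial i b p * partial i (partial j (partial j b)) p)"
      by (subst sum.swap) (intro sum.cong refl; simp add: third_partial_commute_b[OF p])
    also have "\<dots> = (\<Sum>i\<in>Basis. partial i b p * partial i (lap b) p)"
      by (intro sum.cong refl) (simp add: partial_lap_b[OF p] sum_distrib_left)
    finally show ?thesis .
  qed
  have "lap (\<lambda>q. (norm (grad b q))\<^sup>2) p = (\<Sum>j\<in>Basis. partial j (partial j (\<lambda>q. (norm (grad b q))\<^sup>2)) p)"
    by (simp add: lap_def hess_def)
  also have "\<dots> = 2 * (\<Sum>j\<in>Basis. \<Sum>i\<in>Basis. (partial j (partial i b) p)\<^sup>2)
      + 2 * (\<Sum>j\<in>Basis. \<Sum>i\<in>Basis. partial i b p * partial j (partial j (partial i b)) p)"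
    by (simp add: second sum.distrib sum_distrib_left)
  finally show ?thesis unfolding third inner_grad by (simp add: hess_def)
qed

lemma hess_sq_b:
  assumes p: "p \<in> S" and j: "j \<in> Basis"
  shows "hess (\<lambda>q. (b q)\<^sup>2) p i j = 2 * (partial i b p * partial j b p + b p * hess b p i j)"
proof -
  have first: "partial j (\<lambda>q. (b q)\<^sup>2) x = 2 * b x * partial j b x" if "x \<in> S" for x
  proof -
    have "((\<lambda>q. (b q)\<^sup>2) has_derivative (\<lambda>h. 2 * b x * partial h b x)) (at x)"
      using has_derivative_frechet_derivative[OF differentiable_b[OF that]]
      by (auto intro!: derivative_eq_intros simp: power2_eq_square)
    then show ?thesis by (rule has_derivative_imp_partial)
  qed
  have "((\<lambda>q. 2 * b q * partial j b q) has_derivative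
      (\<lambda>h. 2 * (partial h b p * partial j b p + b p * partial h (partial j b) p))) (at p)"
    using has_derivative_frechet_derivative[OF differentiable_b[OF p]]
      has_derivative_frechet_derivative[OF differentiable_partial_b[OF p j]]
    by (auto intro!: derivative_eq_intros simp: algebra_simps)
  then have "partial i (\<lambda>q. 2 * b q * partial j b q) p
      = 2 * (partial i b p * partial j b p + b p * partial i (partial j b) p)"
    by (rule has_derivative_imp_partial)
  then show ?thesis
    unfolding hess_def using partial_cong_open[OF open_S p first] by simp
qed

lemma lap_powr_b:
  assumes q: "q \<in> S"
  shows "lap (\<lambda>x. b x powr r) q
    = r * b q powr (r - 1) * lap b q + r * (r - 1) * b q powr (r - 2) * (norm (grad b q))\<^sup>2"
proof -
  have first: "partial j (\<lambda>x. b x powr r) x = r * b x powr (r - 1) * partial j b x" if "x \<in> S" for j x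
    using partial_compose_real[OF has_real_derivative_powr[OF b_pos[OF that]] differentiable_b[OF that]]
    by simp
  have second: "partial j (partial j (\<lambda>x. b x powr r)) q
      = r * (r - 1) * b q powr (r - 2) * (partial j b q)\<^sup>2 + r * b q powr (r - 1) * partial j (partial j b) q"
    if j: "j \<in> Basis" for j
  proof -
    have "((\<lambda>x. b x powr (r - 1)) has_derivative (\<lambda>h. partial h b q * ((r - 1) * b q powr (r - 1 - 1)))) (at q)"
      by (rule DERIV_compose_FDERIV[OF has_real_derivative_powr[OF b_pos[OF q]]
            has_derivative_frechet_derivative[OF differentiable_b[OF q]]])
    then have "((\<lambda>x. r * b x powr (r - 1) * partial j b x) has_derivative
        (\<lambda>h. r * b q powr (r - 1) * partial h (partial j b) q
             + r * (partial h b q * ((r - 1) * b q powr (r - 1 - 1))) * partial j b q)) (at q)"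
      by (rule has_derivative_mult[OF has_derivative_mult_right
            has_derivative_frechet_derivative[OF differentiable_partial_b[OF q j]]])
    then have "partial j (\<lambda>x. r * b x powr (r - 1) * partial j b x) q
        = r * b q powr (r - 1) * partial j (partial j b) q
          + r * (partial j b q * ((r - 1) * b q powr (r - 1 - 1))) * partial j b q"
      by (rule has_derivative_imp_partial)
    moreover have "r - 1 - 1 = r - 2" by simp
    ultimately show ?thesis
      using partial_cong_open[OF open_S q first] by (simp add: power2_eq_square algebra_simps)
  qed
  have "lap (\<lambda>x. b x powr r) q = (\<Sum>j\<in>Basis. r * (r - 1) * b q powr (r - 2) * (partial j b q)\<^sup>2
      + r * b q powr (r - 1) * partial j (partial j b) q)"
    unfolding lap_def hess_def by (intro sum.cong refl second)
  then show ?thesis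
    by (simp add: lap_def hess_def norm_grad_sq sum.distrib sum_distrib_left)
qed

lemma psi_eq_b:
  assumes q: "q \<in> S" and v: "\<And>x. x \<in> S \<Longrightarrow> v x = b x powr (2 - real n)"
  shows "b q ^ n * lap v q = (2 - real n) * (b q * lap b q + (1 - real n) * (norm (grad b q))\<^sup>2)"
proof -
  have pos: "b q > 0" by (rule b_pos[OF q])
  then have pow: "b q ^ n = b q powr real n" by (simp add: powr_realpow)
  have "b q ^ n * b q powr (2 - real n - 1) = b q" "b q ^ n * b q powr (2 - real n - 2) = 1"
    unfolding pow using pos by (simp_all add: powr_add[symmetric])
  moreover have "lap v q = lap (\<lambda>x. b x powr (2 - real n)) q"
    by (rule lap_cong_open[OF open_S q v])
  moreover have "b q ^ n * lap (\<lambda>x. b x powr (2 - real n)) q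
    = (2 - real n) * (b q ^ n * b q powr (2 - real n - 1)) * lap b q
      + (2 - real n) * (2 - real n - 1) * (b q ^ n * b q powr (2 - real n - 2)) * (norm (grad b q))\<^sup>2"
    unfolding lap_powr_b[OF q] by (simp add: algebra_simps)
  ultimately show ?thesis by (simp add: algebra_simps)
qed

lemma partial_psi_b:
  assumes p: "p \<in> S" and i: "i \<in> Basis" and v: "\<And>x. x \<in> S \<Longrightarrow> v x = b x powr (2 - real n)"
  shows "partial i (\<lambda>q. b q ^ n * lap v q) p
    = (2 - real n) * (partial i b p * lap b p + b p * partial i (lap b) p
        + 2 * (1 - real n) * (\<Sum>j\<in>Basis. partial j b p * partial i (partial j b) p))"
proof -
  define G where "G = (\<lambda>q. (norm (grad b q))\<^sup>2)"
  have "((\<lambda>q. (2 - real n) * (b q * lap b q + (1 - real n) * G q)) has_derivative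
      (\<lambda>h. (2 - real n) * (partial h b p * lap b p + b p * partial h (lap b) p + (1 - real n) * partial h G p))) (at p)"
    using has_derivative_frechet_derivative[OF differentiable_b[OF p]]
      has_derivative_frechet_derivative[OF smooth_on_imp_differentiable[OF smooth_lap_b open_S p]]
      has_derivative_frechet_derivative[OF smooth_on_imp_differentiable[OF smooth_norm_grad_sq_b open_S p, folded G_def]]
    by (auto intro!: derivative_eq_intros simp: algebra_simps)
  then have "partial i (\<lambda>q. (2 - real n) * (b q * lap b q + (1 - real n) * G q)) p
      = (2 - real n) * (partial i b p * lap b p + b p * partial i (lap b) p + (1 - real n) * partial i G p)"
    by (rule has_derivative_imp_partial)
  moreover have "partial i (\<lambda>q. b q ^ n * lap v q) p
      = partial i (\<lambda>q. (2 - real n) * (b q * lap b q + (1 - real n) * G q)) p"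
    unfolding G_def by (rule partial_cong_open[OF open_S p psi_eq_b[OF _ v]])
  moreover have "partial i G p = 2 * (\<Sum>j\<in>Basis. partial j b p * partial i (partial j b) p)"
    unfolding G_def by (rule partial_norm_grad_sq_b[OF p])
  ultimately show ?thesis by (simp add: algebra_simps)
qed

lemma inner_grad_ln_b:
  assumes p: "p \<in> S"
  shows "grad (\<lambda>q. ln (b q)) p \<bullet> grad G p = (\<Sum>j\<in>Basis. partial j b p * partial j G p) / b p"
proof -
  have "partial j (\<lambda>q. ln (b q)) p = partial j b p / b p" for j
    using partial_compose_real[OF DERIV_ln[OF b_pos[OF p]] differentiable_b[OF p]]
    by (simp add: divide_inverse mult.commute)
  then show ?thesis by (simp add: inner_grad sum_divide_distrib)
qed

lemma inner_grad_ln_grad_norm_grad_sq_b: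
  assumes p: "p \<in> S"
  shows "grad (\<lambda>q. ln (b q)) p \<bullet> grad (\<lambda>q. c * (norm (grad b q))\<^sup>2) p
    = 2 * c * (\<Sum>i\<in>Basis. \<Sum>j\<in>Basis. partial i b p * partial j b p * hess b p i j) / b p"
proof -
  have "partial j (\<lambda>q. c * (norm (grad b q))\<^sup>2) p = c * (2 * (\<Sum>i\<in>Basis. partial i b p * hess b p j i))" for j
    using partial_cmult[OF smooth_on_imp_differentiable[OF smooth_norm_grad_sq_b open_S p]]
      partial_norm_grad_sq_b[OF p]
    by (simp add: hess_def)
  then show ?thesis
    unfolding inner_grad_ln_b[OF p] by (simp add: sum_distrib_left mult_ac)
qed

lemma tf_hess_sq_b_sq:
  assumes p: "p \<in> S"
  shows "tf_hess_sq (\<lambda>q. (b q)\<^sup>2) p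
    = 4 * ((norm (grad b p))\<^sup>2)\<^sup>2
      + 8 * b p * (\<Sum>i\<in>Basis. \<Sum>j\<in>Basis. partial i b p * partial j b p * hess b p i j)
      + 4 * (b p)\<^sup>2 * (\<Sum>i\<in>Basis. \<Sum>j\<in>Basis. (hess b p i j)\<^sup>2)
      - 4 * ((norm (grad b p))\<^sup>2 + b p * lap b p)\<^sup>2 / real DIM('v)"
proof -
  let ?a = "\<lambda>i. partial i b p"
  have "(\<Sum>i\<in>Basis. \<Sum>j\<in>Basis. (hess (\<lambda>q. (b q)\<^sup>2) p i j)\<^sup>2)
      = (\<Sum>i\<in>Basis. \<Sum>j\<in>Basis. 4 * ((?a i)\<^sup>2 * (?a j)\<^sup>2) + 8 * b p * (?a i * ?a j * hess b p i j)
                                 + 4 * (b p)\<^sup>2 * (hess b p i j)\<^sup>2)"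
    by (intro sum.cong refl) (simp add: hess_sq_b[OF p], simp add: power2_eq_square algebra_simps)
  also have "\<dots> = 4 * (\<Sum>i\<in>Basis. \<Sum>j\<in>Basis. (?a i)\<^sup>2 * (?a j)\<^sup>2)
      + 8 * b p * (\<Sum>i\<in>Basis. \<Sum>j\<in>Basis. ?a i * ?a j * hess b p i j)
      + 4 * (b p)\<^sup>2 * (\<Sum>i\<in>Basis. \<Sum>j\<in>Basis. (hess b p i j)\<^sup>2)"
    by (simp add: sum.distrib sum_distrib_left)
  also have "(\<Sum>i\<in>Basis. \<Sum>j\<in>Basis. (?a i)\<^sup>2 * (?a j)\<^sup>2) = ((norm (grad b p))\<^sup>2)\<^sup>2"
    unfolding norm_grad_sq power2_eq_square[of "sum _ _"] by (simp add: sum_product)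
  finally have "(\<Sum>i\<in>Basis. \<Sum>j\<in>Basis. (hess (\<lambda>q. (b q)\<^sup>2) p i j)\<^sup>2)
      = 4 * ((norm (grad b p))\<^sup>2)\<^sup>2
        + 8 * b p * (\<Sum>i\<in>Basis. \<Sum>j\<in>Basis. ?a i * ?a j * hess b p i j)
        + 4 * (b p)\<^sup>2 * (\<Sum>i\<in>Basis. \<Sum>j\<in>Basis. (hess b p i j)\<^sup>2)" .
  moreover have "lap (\<lambda>q. (b q)\<^sup>2) p = 2 * ((norm (grad b p))\<^sup>2 + b p * lap b p)"
    unfolding lap_def norm_grad_sq
    by (simp add: hess_sq_b[OF p], simp add: power2_eq_square sum.distrib sum_distrib_left)
  ultimately show ?thesis
    unfolding tf_hess_sq_eq by (simp add: power2_eq_square) (simp add: algebra_simps)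
qed

lemma inner_grad_ln_grad_psi_b:
  assumes p: "p \<in> S" and v: "\<And>x. x \<in> S \<Longrightarrow> v x = b x powr (2 - real n)"
  shows "grad (\<lambda>q. ln (b q)) p \<bullet> grad (\<lambda>q. b q ^ n * lap v q) p
    = (2 - real n) * ((norm (grad b p))\<^sup>2 * lap b p + b p * (grad b p \<bullet> grad (lap b) p)
        + 2 * (1 - real n) * (\<Sum>i\<in>Basis. \<Sum>j\<in>Basis. partial i b p * partial j b p * hess b p i j)) / b p"
proof -
  have "(\<Sum>i\<in>Basis. partial i b p * partial i (\<lambda>q. b q ^ n * lap v q) p)
      = (\<Sum>i\<in>Basis. (2 - real n) * ((partial i b p)\<^sup>2 * lap b p + b p * (partial i b p * partial i (lap b) p)
          + 2 * (1 - real n) * (\<Sum>j\<in>Basis. partial i b p * partial j b p * hess b p i j)))"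
    by (intro sum.cong refl)
      (simp add: partial_psi_b[OF p _ v], simp add: hess_def sum_distrib_left power2_eq_square algebra_simps)
  also have "\<dots> = (2 - real n) * ((norm (grad b p))\<^sup>2 * lap b p + b p * (grad b p \<bullet> grad (lap b) p)
      + 2 * (1 - real n) * (\<Sum>i\<in>Basis. \<Sum>j\<in>Basis. partial i b p * partial j b p * hess b p i j))"
    unfolding norm_grad_sq inner_grad by (simp add: sum.distrib flip: sum_distrib_left sum_distrib_right)
  finally show ?thesis
    unfolding inner_grad_ln_b[OF p] by simp
qed

lemma laplacian_grad_energy_identity:
  assumes p: "p \<in> S" and dim: "DIM('v) \<noteq> 2"
    and v: "\<And>x. x \<in> S \<Longrightarrow> v x = b x powr (2 - real DIM('v))"
  shows "lap (\<lambda>q. 2 * real DIM('v) * (norm (grad b q))\<^sup>2) p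
      + 2 * (2 - real DIM('v)) * (grad (\<lambda>q. ln (b q)) p \<bullet> grad (\<lambda>q. 2 * real DIM('v) * (norm (grad b q))\<^sup>2) p)
    = real DIM('v) / (b p)\<^sup>2 * tf_hess_sq (\<lambda>q. (b q)\<^sup>2) p
      + 4 * real DIM('v) / (2 - real DIM('v)) * (grad (\<lambda>q. ln (b q)) p \<bullet> grad (\<lambda>q. b q ^ DIM('v) * lap v q) p)
      + 2 * (2 * real DIM('v) * (norm (grad b p))\<^sup>2) * (b p ^ DIM('v) * lap v p) / ((2 - real DIM('v)) * (b p)\<^sup>2)
      + 4 * (b p ^ DIM('v) * lap v p)\<^sup>2 / ((2 - real DIM('v))\<^sup>2 * (b p)\<^sup>2)"
proof -
  have psi: "b p ^ DIM('v) * lap v p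
      = (2 - real DIM('v)) * (b p * lap b p + (1 - real DIM('v)) * (norm (grad b p))\<^sup>2)"
    by (rule psi_eq_b[OF p v])
  have grad_psi: "grad (\<lambda>q. ln (b q)) p \<bullet> grad (\<lambda>q. b q ^ DIM('v) * lap v q) p
      = (2 - real DIM('v)) * ((norm (grad b p))\<^sup>2 * lap b p + b p * (grad b p \<bullet> grad (lap b) p)
        + 2 * (1 - real DIM('v)) * (\<Sum>i\<in>Basis. \<Sum>j\<in>Basis. partial i b p * partial j b p * hess b p i j))
        / b p"
    by (rule inner_grad_ln_grad_psi_b[OF p v])
  have "real DIM('v) \<noteq> 0" "real DIM('v) \<noteq> 2" "b p \<noteq> 0"
    using dim b_pos[OF p] by auto
  then show ?thesis
    unfolding lap_cmult[OF smooth_norm_grad_sq_b open_S p] lap_norm_grad_sq_b[OF p]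
      inner_grad_ln_grad_norm_grad_sq_b[OF p] tf_hess_sq_b_sq[OF p] grad_psi psi
    by (rule grad_energy_algebra)
qed

end

section \<open>The function \<open>v\<close> away from \<open>y = 0\<close>\<close>

lemma open_off_axis: "open (UNIV \<times> - {0} :: ('a::euclidean_space \<times> 'b::euclidean_space) set)"
  by (intro open_Times open_Compl closed_singleton open_UNIV)

lemma Ck_on_inner_snd:
  assumes "open S"
  shows "Ck_on k (\<lambda>q::'a::euclidean_space \<times> 'b::euclidean_space. snd q \<bullet> snd q) S"
proof (rule Ck_on_cong[OF _ assms])
  show "Ck_on k (\<lambda>q. \<Sum>i\<in>(Basis::'b set). (q \<bullet> (0, i)) * (q \<bullet> (0, i))) S"
    by (intro Ck_on_sum Ck_on_mult Ck_on_inner assms finite_Basis)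
  show "(\<Sum>i\<in>(Basis::'b set). (x \<bullet> (0, i)) * (x \<bullet> (0, i))) = snd x \<bullet> snd x" for x :: "'a \<times> 'b"
    by (simp add: inner_Pair_0 euclidean_inner[of "snd x" "snd x"])
qed

text \<open>Only \<open>u\<close> is assumed smooth, so \<open>v\<close> is expressed through \<open>u\<close> rather than \<open>f\<close>.\<close>

lemma vfun_eq_heat_solution:
  fixes u f :: "'a::euclidean_space \<Rightarrow> real \<Rightarrow> real" and y :: "'b::euclidean_space"
  assumes u_f: "\<And>z t. t > 0 \<Longrightarrow> u z t = t powr (- real DIM('a) / 2) * exp (- f z t)"
    and y: "y \<noteq> 0"
  shows "vfun f (x, y) = (y \<bullet> y) powr ((2 - real DIM('a \<times> 'b)) / 2)
      * (u x (y \<bullet> y / (2 * real DIM('b))) * (y \<bullet> y / (2 * real DIM('b))) powr (real DIM('a) / 2))"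
proof -
  let ?s = "y \<bullet> y / (2 * real DIM('b))"
  have s: "?s > 0" using y by simp
  have "y \<bullet> y = norm y powr 2"
    using y by (simp add: power2_norm_eq_inner[symmetric])
  then have "(y \<bullet> y) powr ((2 - real DIM('a \<times> 'b)) / 2) = norm y powr (2 * ((2 - real DIM('a \<times> 'b)) / 2))"
    by (simp only: powr_powr)
  moreover have "2 * ((2 - real DIM('a \<times> 'b)) / 2) = 2 - real DIM('a \<times> 'b)"
    by simp
  ultimately have norm: "(y \<bullet> y) powr ((2 - real DIM('a \<times> 'b)) / 2) = norm y powr (2 - real DIM('a \<times> 'b))"
    by (simp only:)
  have "u x ?s * ?s powr (real DIM('a) / 2)
      = (?s powr (- real DIM('a) / 2) * ?s powr (real DIM('a) / 2)) * exp (- f x ?s)"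
    using u_f[OF s] by (simp add: mult_ac)
  also have "\<dots> = exp (- f x ?s)"
    using s y by (simp add: powr_add[symmetric])
  finally show ?thesis
    unfolding vfun_def norm by (simp add: power2_norm_eq_inner)
qed

lemma smooth_vfun:
  fixes u f :: "'a::euclidean_space \<Rightarrow> real \<Rightarrow> real"
  assumes u_smooth: "smooth_on (\<lambda>(z, t). u z t) (UNIV \<times> {0<..})"
    and u_f: "\<And>z t. t > 0 \<Longrightarrow> u z t = t powr (- real DIM('a) / 2) * exp (- f z t)"
  shows "smooth_on (vfun f :: 'a \<times> 'b::euclidean_space \<Rightarrow> real) (UNIV \<times> - {0})"
  unfolding smooth_on_def
proof
  fix k
  let ?S = "UNIV \<times> - {0} :: ('a \<times> 'b) set"
  define s where "s = (\<lambda>q::'a \<times> 'b. snd q \<bullet> snd q / (2 * real DIM('b)))"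
  have s_pos: "s q > 0" if "q \<in> ?S" for q
  proof -
    have "snd q \<noteq> 0" using that by auto
    then show ?thesis unfolding s_def by simp
  qed
  have s: "Ck_on k s ?S"
    unfolding s_def divide_inverse by (intro Ck_on_mult Ck_on_inner_snd Ck_on_const open_off_axis)
  have "Ck_on k (\<lambda>q. (\<lambda>(z, t). u z t) (fst q, s q)) ?S"
  proof (rule Ck_on_compose[where T = "UNIV \<times> {0<..}"])
    show "Ck_on k (\<lambda>(z, t). u z t) (UNIV \<times> {0<..})"
      using u_smooth unfolding smooth_on_def by blast
    show "\<forall>i\<in>Basis. Ck_on k (\<lambda>q. (fst q, s q) \<bullet> i) ?S"
    proof
      fix i :: "'a \<times> real"
      have "Ck_on k (\<lambda>q. q \<bullet> (fst i, 0) + s q * snd i) ?S"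
        by (intro Ck_on_add Ck_on_mult Ck_on_inner Ck_on_const s open_off_axis)
      then show "Ck_on k (\<lambda>q. (fst q, s q) \<bullet> i) ?S"
        by (rule Ck_on_cong[OF _ open_off_axis]) (cases i, auto simp: inner_Pair_0)
    qed
  qed (use s_pos open_off_axis in \<open>auto intro: open_Times\<close>)
  then have "Ck_on k (\<lambda>q. (snd q \<bullet> snd q) powr ((2 - real DIM('a \<times> 'b)) / 2)
      * (u (fst q) (s q) * s q powr (real DIM('a) / 2))) ?S"
    by (intro Ck_on_mult Ck_on_powr Ck_on_inner_snd s s_pos open_off_axis) auto
  then show "Ck_on k (vfun f) ?S"
    by (rule Ck_on_cong[OF _ open_off_axis])
      (auto simp: s_def vfun_eq_heat_solution[OF u_f] split_paired_all)
qed

theorem lemma2p3: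
  fixes u f :: "'a::euclidean_space \<Rightarrow> real \<Rightarrow> real"
    and x :: 'a and y :: "'b::euclidean_space"
  assumes N3: "DIM('b) \<ge> 3"
    and u_smooth: "smooth_on (\<lambda>(z, t). u z t) (UNIV \<times> {0<..})"
    and u_pos: "\<And>z t. t > 0 \<Longrightarrow> u z t > 0"
    and heat: "\<And>z t. t > 0 \<Longrightarrow> ((\<lambda>s. u z s) has_real_derivative lap (\<lambda>w. u w t) z) (at t)"
    and u_f: "\<And>z t. t > 0 \<Longrightarrow> u z t = t powr (- real DIM('a) / 2) * exp (- f z t)"
    and y0: "y \<noteq> 0"
  shows "lap (dfun f :: 'a \<times> 'b \<Rightarrow> real) (x, y)
           + 2 * (2 - real DIM('a \<times> 'b))
             * (grad (\<lambda>p. ln (bfun f p)) (x, y) \<bullet> grad (dfun f) (x, y))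
         = real DIM('a \<times> 'b) / (bfun f (x, y))\<^sup>2 * Bsq f (x, y)
           + 4 * real DIM('a \<times> 'b) / (2 - real DIM('a \<times> 'b))
             * (grad (\<lambda>p. ln (bfun f p)) (x, y) \<bullet> grad (psifun f) (x, y))
           + 2 * dfun f (x, y) * psifun f (x, y)
             / ((2 - real DIM('a \<times> 'b)) * (bfun f (x, y))\<^sup>2)
           + 4 * (psifun f (x, y))\<^sup>2
             / ((2 - real DIM('a \<times> 'b))\<^sup>2 * (bfun f (x, y))\<^sup>2)"
proof -
  let ?S = "UNIV \<times> - {0} :: ('a \<times> 'b) set"
  let ?m = "real DIM('a \<times> 'b)"
  have dim: "DIM('a \<times> 'b) \<noteq> 2" using N3 by simp
  have v_pos: "vfun f q > 0" if "q \<in> ?S" for q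
    using that by (cases q) (simp add: vfun_def)
  have b_smooth: "smooth_on (bfun f) ?S"
    unfolding bfun_def by (rule smooth_on_powr[OF smooth_vfun[OF u_smooth u_f] open_off_axis v_pos])
  have b_pos: "bfun f q > 0" if "q \<in> ?S" for q
    using v_pos[OF that] by (simp add: bfun_def)
  have v_eq_b: "vfun f q = bfun f q powr (2 - ?m)" if "q \<in> ?S" for q
  proof -
    have "bfun f q powr (2 - ?m) = vfun f q powr (1 / (2 - ?m) * (2 - ?m))"
      unfolding bfun_def by (simp add: powr_powr)
    also have "\<dots> = vfun f q" using dim v_pos[OF that] by simp
    finally show ?thesis by simp
  qed
  have "(x, y) \<in> ?S" using y0 by simp
  from laplacian_grad_energy_identity[OF open_off_axis b_smooth b_pos this dim v_eq_b]
  show ?thesis unfolding dfun_def psifun_def Bsq_def by simp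
qed

end
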